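(* Let $\ell\ge2$ be an integer and let $F$ be one of: $2P_\ell$ with $\ell$ even; $P_{\ell+1}\cup P_\ell$; $P_{\ell+2}\cup P_\ell$ with $\ell$ odd; $2P_\ell\cup P_2$ with $\ell$ odd (so that $\delta_F=\ell-1$). Then for every integer $t\ge1$ and every integer $1\le s\le \delta_F+1$, $$\mathcal{N}_s\big(G_F(t(\ell-1)+1)\big)\ \ge\ \mathcal{N}_s\big(K_1+tK_{\ell-1}\big).$$
   Context: $P_m$, $K_m$, $E_m$: path, complete graph, edgeless graph on $m$ vertices; $G\cup H$ disjoint union, $tG$ is $t$ disjoint copies, $G+H$ the join. For a linear forest $F=P_{\ell_1}\cup\cdots\cup P_{\ell_k}$, $\delta_F=\sum_i\lfloor\ell_i/2\rfloor-1$, $G_F(n)=K_{\delta_F}+E_{n-\delta_F}$ if some $\ell_i$ is even and $G_F(n)=K_{\delta_F}+(E_{n-\delta_F-2}\cup K_2)$ if all $\ell_i$ are odd. $\mathcal{N}_s(G)$ is the number of copies of $K_s$ in $G$. *)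

theory Defs
  imports Main
begin

definition num_cliques :: "nat set \<Rightarrow> (nat \<Rightarrow> nat \<Rightarrow> bool) \<Rightarrow> nat \<Rightarrow> nat" where
  "num_cliques V E s = card {S. S \<subseteq> V \<and> card S = s \<and> (\<forall>x\<in>S. \<forall>y\<in>S. x \<noteq> y \<longrightarrow> E x y)}"

(* A linear forest F = P_{l_1} \<union> ... \<union> P_{l_k} is given by the list [l_1,...,l_k]. *)
definition delta_F :: "nat list \<Rightarrow> nat" where
  "delta_F F = (\<Sum>l\<leftarrow>F. l div 2) - 1"

(* G_F(n) on vertex set {0..<n}: vertices 0..<delta_F form the clique K_{delta_F},
   joined to everything; if all l_i are odd, additionally the edge {delta_F, delta_F+1}
   (the K_2 inside the independent part). *)
definition GF_edge :: "nat list \<Rightarrow> nat \<Rightarrow> nat \<Rightarrow> bool" where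
  "GF_edge F x y = (x \<noteq> y \<and>
     (x < delta_F F \<or> y < delta_F F \<or>
      ((\<forall>l\<in>set F. odd l) \<and> {x, y} = {delta_F F, delta_F F + 1})))"

definition GF_vertices :: "nat \<Rightarrow> nat set" where
  "GF_vertices n = {0..<n}"

(* K_1 + t K_{m}: vertex set {0..<t*m+1}; vertex 0 is the K_1, vertex i \<ge> 1 lies in
   copy number (i-1) div m of K_m. *)
definition K1_join_tK_edge :: "nat \<Rightarrow> nat \<Rightarrow> nat \<Rightarrow> bool" where
  "K1_join_tK_edge m x y = (x \<noteq> y \<and> (x = 0 \<or> y = 0 \<or> (x - 1) div m = (y - 1) div m))"

end

theory Submission
  imports Defs
begin

text \<open>Write \<open>m = l - 1 = \<delta>\<^sub>F\<close> and \<open>n = t m + 1\<close>. In \<open>G\<^sub>F(n)\<close> every \<open>s\<close>-set with at most one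
  vertex outside the dominating clique \<open>K\<^sub>m\<close> is a clique, so \<open>G\<^sub>F(n)\<close> has at least
  \<open>C(m,s) + (n - m) C(m,s-1)\<close> copies of \<open>K\<^sub>s\<close>. In \<open>K\<^sub>1 + t K\<^sub>m\<close> every clique with two or more
  vertices lies in one of the \<open>t\<close> copies of \<open>K\<^sub>m\<^sub>+\<^sub>1\<close>, so there are at most \<open>t C(m+1,s)\<close> of them.
  Pascal's rule together with \<open>C(m+1,s) \<le> m C(m,s-1)\<close> for \<open>s \<ge> 2\<close> compares the two bounds;
  for \<open>s = 1\<close> both sides count the \<open>n\<close> vertices.\<close>

lemma num_cliques_one:
  assumes "finite V"
  shows "num_cliques V E 1 = card V"
proof -
  have "{S. S \<subseteq> V \<and> card S = 1 \<and> (\<forall>x\<in>S. \<forall>y\<in>S. x \<noteq> y \<longrightarrow> E x y)} = {S. S \<subseteq> V \<and> card S = 1}"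
    by (auto simp: card_Suc_eq)
  then show ?thesis
    using assms by (simp add: num_cliques_def n_subsets)
qed

lemma num_cliques_dominating_clique_ge:
  assumes "finite V" and "K \<subseteq> V" and "s \<ge> 1"
    and dominating: "\<And>x y. x \<in> V \<Longrightarrow> y \<in> V \<Longrightarrow> x \<noteq> y \<Longrightarrow> x \<in> K \<or> y \<in> K \<Longrightarrow> E x y"
  shows "(card K choose s) + card (V - K) * (card K choose (s - 1)) \<le> num_cliques V E s"
proof -
  define cliques where
    "cliques = {S. S \<subseteq> V \<and> card S = s \<and> (\<forall>x\<in>S. \<forall>y\<in>S. x \<noteq> y \<longrightarrow> E x y)}"
  define inside where "inside = {S. S \<subseteq> K \<and> card S = s}"
  define bases where "bases = {T. T \<subseteq> K \<and> card T = s - 1}"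
  define one_outside where "one_outside = (\<lambda>(b, T). insert b T) ` ((V - K) \<times> bases)"
  have "finite K"
    using assms(1,2) by (rule finite_subset[rotated])
  have "finite cliques"
    using assms(1) by (intro finite_subset[of cliques "Pow V"]) (auto simp: cliques_def)
  have inside: "inside \<subseteq> cliques"
    unfolding inside_def cliques_def using assms(2) dominating by blast
  have one_outside: "one_outside \<subseteq> cliques"
  proof
    fix S assume "S \<in> one_outside"
    then obtain b T where S: "S = insert b T" and b: "b \<in> V" "b \<notin> K" and T: "T \<subseteq> K" "card T = s - 1"
      unfolding one_outside_def bases_def by auto
    have "finite T" "b \<notin> T"
      using T(1) b(2) \<open>finite K\<close> finite_subset by auto
    then have "card S = s"
      using S T(2) \<open>s \<ge> 1\<close> by simp
    moreover have "S \<subseteq> V"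
      using S b(1) T(1) assms(2) by blast
    moreover have "E x y" if "x \<in> S" "y \<in> S" "x \<noteq> y" for x y
      using that S T(1) \<open>S \<subseteq> V\<close> dominating by blast
    ultimately show "S \<in> cliques"
      unfolding cliques_def by blast
  qed
  have disjoint: "inside \<inter> one_outside = {}"
    unfolding inside_def one_outside_def bases_def by auto
  have "inj_on (\<lambda>(b, T). insert b T) ((V - K) \<times> bases)"
  proof (rule inj_onI)
    fix p q
    assume "p \<in> (V - K) \<times> bases" "q \<in> (V - K) \<times> bases"
      and eq_pq: "(\<lambda>(b, T). insert b T) p = (\<lambda>(b, T). insert b T) q"
    then obtain b T b' T' where pq: "p = (b, T)" "q = (b', T')"
      and "b \<notin> K" "b' \<notin> K" "T \<subseteq> K" "T' \<subseteq> K"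
      unfolding bases_def by auto
    then have "b \<notin> T" "b \<notin> T'" "b' \<notin> T'"
      by auto
    moreover have eq: "insert b T = insert b' T'"
      using eq_pq pq by simp
    ultimately have "b = b'"
      by blast
    with eq \<open>b \<notin> T\<close> \<open>b' \<notin> T'\<close> show "p = q"
      using pq by (simp add: insert_ident)
  qed
  then have "card one_outside = card (V - K) * (card K choose (s - 1))"
    unfolding one_outside_def bases_def using \<open>finite K\<close>
    by (simp add: card_image card_cartesian_product n_subsets)
  moreover have "card inside = card K choose s"
    unfolding inside_def using \<open>finite K\<close> by (simp add: n_subsets)
  moreover have "card (inside \<union> one_outside) = card inside + card one_outside"
    using disjoint inside one_outside \<open>finite cliques\<close> by (simp add: card_Un_disjoint finite_subset)
  moreover have "card (inside \<union> one_outside) \<le> card cliques"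
    using inside one_outside \<open>finite cliques\<close> by (simp add: card_mono)
  ultimately show ?thesis
    unfolding num_cliques_def cliques_def[symmetric] by simp
qed

lemma K1_join_tK_clique_subset_block:
  assumes "m \<ge> 1"
    and clique: "\<forall>x\<in>S. \<forall>z\<in>S. x \<noteq> z \<longrightarrow> K1_join_tK_edge m x z"
    and "y \<in> S" "y \<noteq> 0"
  shows "S \<subseteq> insert 0 {((y - 1) div m) * m + 1..<((y - 1) div m) * m + m + 1}"
proof
  fix x assume "x \<in> S"
  show "x \<in> insert 0 {((y - 1) div m) * m + 1..<((y - 1) div m) * m + m + 1}"
  proof (cases "x = 0")
    case False
    have "(x - 1) div m = (y - 1) div m"
      using clique \<open>x \<in> S\<close> \<open>y \<in> S\<close> \<open>y \<noteq> 0\<close> False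
      unfolding K1_join_tK_edge_def by (cases "x = y") auto
    moreover have "x - 1 = (x - 1) div m * m + (x - 1) mod m" and "(x - 1) mod m < m"
      using \<open>m \<ge> 1\<close> by simp_all
    ultimately show ?thesis
      using False by auto
  qed simp
qed

lemma num_cliques_K1_join_tK_le:
  assumes "m \<ge> 1" and "s \<ge> 2"
  shows "num_cliques {0..<t * m + 1} (K1_join_tK_edge m) s \<le> t * (Suc m choose s)"
proof -
  define cliques where "cliques =
    {S. S \<subseteq> {0..<t * m + 1} \<and> card S = s \<and> (\<forall>x\<in>S. \<forall>y\<in>S. x \<noteq> y \<longrightarrow> K1_join_tK_edge m x y)}"
  define block where "block = (\<lambda>i::nat. insert 0 {i * m + 1..<i * m + m + 1})"
  define in_block where "in_block = (\<lambda>i. {S. S \<subseteq> block i \<and> card S = s})"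
  have "cliques \<subseteq> (\<Union>i<t. in_block i)"
  proof
    fix S assume "S \<in> cliques"
    then have S: "card S = s" "S \<subseteq> {0..<t * m + 1}"
      "\<forall>x\<in>S. \<forall>y\<in>S. x \<noteq> y \<longrightarrow> K1_join_tK_edge m x y"
      unfolding cliques_def by auto
    have "\<not> S \<subseteq> {0}"
      using S(1) \<open>s \<ge> 2\<close> card_mono[of "{0::nat}" S] by fastforce
    then obtain y where "y \<in> S" "y \<noteq> 0"
      by blast
    then have "(y - 1) div m < t"
      using S(2) \<open>m \<ge> 1\<close> by (auto simp: div_less_iff_less_mult mult.commute)
    moreover have "S \<subseteq> block ((y - 1) div m)"
      unfolding block_def using K1_join_tK_clique_subset_block[OF \<open>m \<ge> 1\<close> S(3) \<open>y \<in> S\<close> \<open>y \<noteq> 0\<close>] .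
    ultimately show "S \<in> (\<Union>i<t. in_block i)"
      unfolding in_block_def using S(1) by blast
  qed
  moreover have "finite (in_block i)" for i
    unfolding in_block_def by (simp add: finite_subset[of _ "Pow (block i)"] block_def)
  moreover have "card (in_block i) = Suc m choose s" for i
  proof -
    have "card (block i) = Suc m"
      unfolding block_def by simp
    then show ?thesis
      unfolding in_block_def by (simp add: n_subsets block_def del: card_insert_disjoint)
  qed
  ultimately have "card cliques \<le> (\<Sum>i<t. card (in_block i))"
    using card_mono[of "\<Union>i<t. in_block i" cliques] card_UN_le[of "{..<t}" in_block] by simp
  then show ?thesis
    unfolding num_cliques_def cliques_def[symmetric] using \<open>card (in_block _) = _\<close> by simp
qed

lemma Suc_choose_le_mult_choose_pred:
  assumes "m \<ge> 1" and "s \<ge> 2"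
  shows "Suc m choose s \<le> m * (m choose (s - 1))"
proof -
  have "s * (Suc m choose s) = Suc m * (m choose (s - 1))"
    using Suc_times_binomial_eq[of m "s - 1"] \<open>s \<ge> 2\<close> by (simp add: mult.commute)
  also have "\<dots> \<le> s * (m * (m choose (s - 1)))"
  proof -
    have "Suc m \<le> s * m"
      using assms mult_le_mono1[of 2 s m] by linarith
    then show ?thesis
      by (metis mult.assoc mult_le_mono1)
  qed
  finally show ?thesis
    using \<open>s \<ge> 2\<close> by simp
qed

lemma block_count_le_split_count:
  assumes "m \<ge> 1" and "s \<ge> 2" and "t \<ge> 1"
  shows "t * (Suc m choose s) \<le> (m choose s) + (t * m + 1 - m) * (m choose (s - 1))"
proof -
  obtain u where t: "t = Suc u"
    using \<open>t \<ge> 1\<close> by (cases t) auto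
  have "t * (Suc m choose s) = u * (Suc m choose s) + (m choose s) + (m choose (s - 1))"
    using t \<open>s \<ge> 2\<close> by (cases s) auto
  also have "\<dots> \<le> u * (m * (m choose (s - 1))) + (m choose s) + (m choose (s - 1))"
    using Suc_choose_le_mult_choose_pred[OF assms(1,2)] by simp
  also have "\<dots> = (m choose s) + (t * m + 1 - m) * (m choose (s - 1))"
    using t by (simp add: algebra_simps)
  finally show ?thesis .
qed

lemma delta_F_claim_forests:
  assumes "(F = [l, l] \<and> even l) \<or> F = [l + 1, l] \<or> (F = [l + 2, l] \<and> odd l)
           \<or> (F = [l, l, 2] \<and> odd l)"
  shows "delta_F F = l - 1"
  using assms unfolding delta_F_def by (elim disjE conjE) (auto elim!: evenE oddE)

theorem claim4p2:
  fixes l t s :: nat and F :: "nat list"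
  assumes "l \<ge> 2"
    and "(F = [l, l] \<and> even l) \<or> F = [l + 1, l] \<or> (F = [l + 2, l] \<and> odd l)
         \<or> (F = [l, l, 2] \<and> odd l)"
    and "t \<ge> 1"
    and "1 \<le> s" and "s \<le> delta_F F + 1"
  shows "num_cliques (GF_vertices (t * (l - 1) + 1)) (GF_edge F) s
         \<ge> num_cliques {0..<t * (l - 1) + 1} (K1_join_tK_edge (l - 1)) s"
proof (cases "s = 1")
  case True
  then show ?thesis
    unfolding True GF_vertices_def num_cliques_one[OF finite_atLeastLessThan] by simp
next
  case False
  define m where "m = l - 1"
  have "m \<ge> 1" "s \<ge> 2"
    using assms(1,4) False unfolding m_def by auto
  have "m \<le> t * m + 1"
    using mult_le_mono1[OF \<open>t \<ge> 1\<close>, of m] by linarith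
  have dominating: "GF_edge F x y" if "x \<noteq> y" "x \<in> {0..<m} \<or> y \<in> {0..<m}" for x y
    using that delta_F_claim_forests[OF assms(2)] unfolding GF_edge_def m_def by auto
  have "num_cliques {0..<t * m + 1} (K1_join_tK_edge m) s \<le> t * (Suc m choose s)"
    using num_cliques_K1_join_tK_le[OF \<open>m \<ge> 1\<close> \<open>s \<ge> 2\<close>] .
  also have "\<dots> \<le> (m choose s) + (t * m + 1 - m) * (m choose (s - 1))"
    using block_count_le_split_count[OF \<open>m \<ge> 1\<close> \<open>s \<ge> 2\<close> \<open>t \<ge> 1\<close>] .
  also have "\<dots> \<le> num_cliques {0..<t * m + 1} (GF_edge F) s"
    using num_cliques_dominating_clique_ge[of "{0..<t * m + 1}" "{0..<m}" s "GF_edge F"]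
      \<open>m \<le> t * m + 1\<close> \<open>s \<ge> 2\<close> dominating by simp
  finally show ?thesis
    unfolding GF_vertices_def m_def .
qed

end
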